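(* For every $w\in S_n$, the map $\Psi$ is a bijection from the set of chains from $w$ to $w_0$ compatible with $(n-1,\dots,1)$ to $\mathrm{FT}(w)$.
   Context: Permutations in one-line notation, $w_0=[n,\dots,1]$, $wt_{i,j}$ is $w$ with positions $i<j$ swapped, $\ell$ the number of inversions. $u\lessdot w$ iff $w=ut_{i,j}$, $i<j$, $\ell(w)=\ell(u)+1$; $u\lessdot_k w$ iff moreover $i\le k<j$. A $k$-chain is increasing if the smaller of the two values exchanged at each step strictly increases along the chain. $(w_1,\dots,w_d)$ is compatible with $(k_1,\dots,k_{d-1})$ if for each $s$ there is an increasing $k_s$-chain from $w_s$ to $w_{s+1}$ (unique when it exists). Flagged tableaux: staircase grid with a cell $(i,j)$ whenever $i+j\le n$, each cell of row $i$ empty or filled with an element of $[i]$. Reading word: scan rows top to bottom, each row right to left, writing $(i,n+1-c)$ for a cell in column $c$ filled with $i$. $T$ with reading word $(a_1,b_1),\dots,(a_d,b_d)$ is associated with $w$ if, with $v_0=w_0$ and $v_s=v_{s-1}t_{a_s,b_s}$, one has $v_s\lessdot v_{s-1}$ for all $s$ and $v_d=w$; $\mathrm{FT}(w)$ is the set of these. The map $\Psi$: let $C=(u_{n-1},\dots,u_0)$ be a chain from $u_{n-1}=w$ to $u_0=w_0$ compatible with $(n-1,\dots,1)$. For $k\in[n-1]$, write the increasing $k$-chain from $u_k$ to $u_{k-1}$ as $u_k=v_{d}\lessdot_k v_{d-1}\lessdot_k\cdots\lessdot_k v_0=u_{k-1}$ with $v_s=v_{s-1}t_{a_s,b_s}$,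 $a_s\le k<b_s$. Place the number $a_s$ in row $k$, column $n+1-b_s$, for each $s\in[d]$, leaving all other cells empty. The resulting flagged tableau is $\Psi(C)$. *)

theory Defs
  imports Main
begin

text \<open>Permutations of [n] in one-line notation are lists; positions are 1-indexed.\<close>

definition perms :: "nat \<Rightarrow> nat list set" where
  "perms n = {w. distinct w \<and> set w = {1..n}}"

definition w0 :: "nat \<Rightarrow> nat list" where
  "w0 n = rev [1..<n+1]"

definition swap :: "nat list \<Rightarrow> nat \<Rightarrow> nat \<Rightarrow> nat list" where
  "swap w i j = w[i - 1 := w ! (j - 1), j - 1 := w ! (i - 1)]"

definition ninv :: "nat list \<Rightarrow> nat" where
  "ninv w = card {(i, j). i < j \<and> j < length w \<and> w ! i > w ! j}"

definition cover :: "nat list \<Rightarrow> nat list \<Rightarrow> bool" where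
  "cover u w \<longleftrightarrow> (\<exists>i j. 1 \<le> i \<and> i < j \<and> j \<le> length u \<and>
      w = swap u i j \<and> ninv w = ninv u + 1)"

definition kcover :: "nat \<Rightarrow> nat list \<Rightarrow> nat list \<Rightarrow> bool" where
  "kcover k u w \<longleftrightarrow> (\<exists>i j. 1 \<le> i \<and> i \<le> k \<and> k < j \<and> j \<le> length u \<and>
      w = swap u i j \<and> ninv w = ninv u + 1)"

definition trans_pos :: "nat list \<Rightarrow> nat list \<Rightarrow> nat \<times> nat" where
  "trans_pos x y = (THE (i, j). 1 \<le> i \<and> i < j \<and> j \<le> length x \<and> y = swap x i j)"

definition exch_min :: "nat list \<Rightarrow> nat list \<Rightarrow> nat" where
  "exch_min x y = (case trans_pos x y of (i, j) \<Rightarrow> min (x ! (i - 1)) (x ! (j - 1)))"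

definition kchain :: "nat \<Rightarrow> nat list list \<Rightarrow> bool" where
  "kchain k xs \<longleftrightarrow> xs \<noteq> [] \<and> (\<forall>i. Suc i < length xs \<longrightarrow> kcover k (xs ! i) (xs ! Suc i))"

definition incr_kchain :: "nat \<Rightarrow> nat list list \<Rightarrow> bool" where
  "incr_kchain k xs \<longleftrightarrow> kchain k xs \<and>
     (\<forall>i. i + 2 < length xs \<longrightarrow>
        exch_min (xs ! i) (xs ! (i + 1)) < exch_min (xs ! (i + 1)) (xs ! (i + 2)))"

definition incr_kchain_from :: "nat \<Rightarrow> nat list \<Rightarrow> nat list \<Rightarrow> nat list list \<Rightarrow> bool" where
  "incr_kchain_from k u v xs \<longleftrightarrow> incr_kchain k xs \<and> hd xs = u \<and> last xs = v"

definition compatible :: "nat list list \<Rightarrow> nat list \<Rightarrow> bool" where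
  "compatible ws ks \<longleftrightarrow> length ks + 1 = length ws \<and>
     (\<forall>s < length ks. \<exists>xs. incr_kchain_from (ks ! s) (ws ! s) (ws ! (s + 1)) xs)"

text \<open>Chains C = (u_{n-1}, ..., u_0) from w to w0 compatible with (n-1,...,1);
  C ! 0 = u_{n-1}, C ! (n-1) = u_0.\<close>
definition chains :: "nat \<Rightarrow> nat list \<Rightarrow> nat list list set" where
  "chains n w = {C. length C = n \<and> hd C = w \<and> last C = w0 n \<and> compatible C (rev [1..<n])}"

text \<open>Flagged tableaux: partial fillings of cells (i,j) (row i, column j).\<close>
type_synonym tableau = "nat \<times> nat \<Rightarrow> nat option"

definition flagged :: "nat \<Rightarrow> tableau \<Rightarrow> bool" where
  "flagged n T \<longleftrightarrow> (\<forall>i j. (T (i, j) \<noteq> None \<longrightarrow> 1 \<le> i \<and> 1 \<le> j \<and> i + j \<le> n) \<and>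
      (\<forall>a. T (i, j) = Some a \<longrightarrow> 1 \<le> a \<and> a \<le> i))"

definition reading_word :: "nat \<Rightarrow> tableau \<Rightarrow> (nat \<times> nat) list" where
  "reading_word n T = concat (map (\<lambda>i. concat (map (\<lambda>c.
      case T (i, c) of None \<Rightarrow> [] | Some a \<Rightarrow> [(a, n + 1 - c)]) (rev [1..<n + 1 - i]))) [1..<n])"

definition associated :: "nat \<Rightarrow> tableau \<Rightarrow> nat list \<Rightarrow> bool" where
  "associated n T w \<longleftrightarrow>
     (let rw = reading_word n T;
          v = (\<lambda>s. foldl (\<lambda>u (a, b). swap u a b) (w0 n) (take s rw))
      in (\<forall>s \<in> {1..length rw}. cover (v s) (v (s - 1))) \<and> v (length rw) = w)"

definition FT :: "nat \<Rightarrow> nat list \<Rightarrow> tableau set" where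
  "FT n w = {T. flagged n T \<and> associated n T w}"

definition chain_pairs :: "nat list list \<Rightarrow> (nat \<times> nat) list" where
  "chain_pairs xs = map (\<lambda>i. trans_pos (xs ! i) (xs ! (i + 1))) [0..<length xs - 1]"

definition Psi :: "nat \<Rightarrow> nat list list \<Rightarrow> tableau" where
  "Psi n C = (\<lambda>(k, c).
     let ch = (THE xs. incr_kchain_from k (C ! (n - 1 - k)) (C ! (n - k)) xs);
         P = set (chain_pairs ch)
     in if 1 \<le> k \<and> k < n \<and> 1 \<le> c \<and> k + c \<le> n \<and> (\<exists>a. (a, n + 1 - c) \<in> P)
        then Some (THE a. (a, n + 1 - c) \<in> P) else None)"

end

theory Submission
  imports Defs
begin

text \<open>Say that y decreases after k if its entries in positions k + 1, ..., n decrease; w_0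
  does so for every k, and so does the lower end of a k-cover whose upper end does. For a
  chain of upward k-covers ending at a permutation that decreases after k, the chain is
  increasing exactly when the right positions b_s strictly decrease: the value x_{a_s} parked at
  b_s is never moved again, so the decreasing tail compares consecutive exchanged values.
  Transpositions straddling k with decreasing right positions are determined by the endpoints,
  since the largest moved position and the value it receives identify the first one. Hence
  along a chain u_{n-1}, ..., u_0 = w_0 each u_{k-1} decreases after k, each increasing k-chain
  is unique, and reversed it is exactly row k of Psi(C) read right to left, a descent by covers
  from u_{k-1} to u_k. Concatenating the rows gives the reading word, so Psi(C) is associated
  with w; conversely, reading the rows of a tableau in FT(w) one at a time rebuilds the chain,
  which inverts Psi.\<close>

section \<open>Transpositions and inversions\<close>

lemma length_swap [simp]: "length (swap u i j) = length u"
  by (simp add: swap_def)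

lemma swap_nth:
  "p < length u \<Longrightarrow> 1 \<le> i \<Longrightarrow> i \<le> length u \<Longrightarrow> 1 \<le> j \<Longrightarrow> j \<le> length u \<Longrightarrow>
   swap u i j ! p = (if p = j - 1 then u ! (i - 1) else if p = i - 1 then u ! (j - 1) else u ! p)"
  by (simp add: swap_def nth_list_update)

lemma swap_nth_right: "1 \<le> j \<Longrightarrow> j \<le> length u \<Longrightarrow> swap u i j ! (j - 1) = u ! (i - 1)"
  by (simp add: swap_def)

lemma swap_swap: "1 \<le> i \<Longrightarrow> i \<le> length u \<Longrightarrow> 1 \<le> j \<Longrightarrow> j \<le> length u \<Longrightarrow> swap (swap u i j) i j = u"
  by (rule nth_equalityI) (auto simp: swap_nth)

lemma distinct_swap: "1 \<le> i \<Longrightarrow> i \<le> length u \<Longrightarrow> 1 \<le> j \<Longrightarrow> j \<le> length u \<Longrightarrow> distinct (swap u i j) = distinct u"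
  by (simp add: swap_def)

lemma set_swap: "1 \<le> i \<Longrightarrow> i \<le> length u \<Longrightarrow> 1 \<le> j \<Longrightarrow> j \<le> length u \<Longrightarrow> set (swap u i j) = set u"
  by (simp add: swap_def)

lemma distinct_nth_pred_eq_iff:
  "distinct x \<Longrightarrow> 1 \<le> a \<Longrightarrow> a \<le> length x \<Longrightarrow> 1 \<le> b \<Longrightarrow> b \<le> length x \<Longrightarrow>
   x ! (a - 1) = x ! (b - 1) \<longleftrightarrow> a = b"
  by (auto simp: nth_eq_iff_index_eq)

lemma swap_eq_swap_imp:
  assumes "distinct u" "1 \<le> i" "i < j" "j \<le> length u" "1 \<le> i'" "i' < j'" "j' \<le> length u"
    and "swap u i j = swap u i' j'"
  shows "i = i' \<and> j = j'"
proof -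
  have moved: "{p. p < length u \<and> swap u i j ! p \<noteq> u ! p} = {i - 1, j - 1}"
    if "1 \<le> i" "i < j" "j \<le> length u" for i j
    using that assms(1) distinct_nth_pred_eq_iff[OF assms(1), of i j]
    by (auto simp: swap_nth split: if_splits)
  have "{i - 1, j - 1} = {i' - 1, j' - 1}"
    using moved[of i j] moved[of i' j'] assms by simp
  then show ?thesis using assms by (auto simp: doubleton_eq_iff)
qed

lemma perms_length: "y \<in> perms n \<Longrightarrow> length y = n"
  unfolding perms_def using distinct_card by fastforce

definition inversions :: "nat list \<Rightarrow> (nat \<times> nat) set" where
  "inversions w = {(i, j). i < j \<and> j < length w \<and> w ! i > w ! j}"

lemma ninv_eq_card_inversions: "ninv w = card (inversions w)"
  by (simp add: ninv_def inversions_def)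

lemma finite_inversions: "finite (inversions w)"
  by (rule finite_subset[of _ "{..<length w} \<times> {..<length w}"]) (auto simp: inversions_def)

text \<open>Swapping an inversion (i, j) loses it, and loses (i, m) for every m between i and j
  whose value lies between the two swapped values; all other inversions are transported
  injectively.\<close>
lemma card_inversions_swap_le:
  assumes ij: "i < j" "j < length u" and gt: "u ! j < u ! i"
  defines "M \<equiv> {m. i < m \<and> m < j \<and> u ! j < u ! m \<and> u ! m < u ! i}"
  shows "card (inversions (u[i := u ! j, j := u ! i])) + 1 + card M \<le> card (inversions u)"
proof -
  define w where "w = u[i := u ! j, j := u ! i]"
  have w_nth: "\<And>p. p < length u \<Longrightarrow> w ! p = (if p = j then u ! i else if p = i then u ! j else u ! p)"
    using ij by (simp add: w_def nth_list_update)
  have length_w: "length w = length u" by (simp add: w_def)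
  define f where "f = (\<lambda>(p, q). if (p, q) \<in> inversions u then (p, q) else if q = i then (p, j) else (i, q))"
  define E where "E = insert (i, j) (Pair i ` M)"
  have finite_M: "finite M" by (rule finite_subset[of _ "{..<j}"]) (auto simp: M_def)
  have "(i, j) \<notin> Pair i ` M" by (auto simp: M_def)
  then have card_E: "card E = 1 + card M"
    using finite_M by (simp add: E_def card_image inj_on_def)
  have E_sub: "E \<subseteq> inversions u"
    using ij gt by (auto simp: E_def M_def inversions_def)
  have "f ` inversions w \<subseteq> inversions u - E"
  proof
    fix x assume "x \<in> f ` inversions w"
    then obtain p q where pq: "(p, q) \<in> inversions w" "x = f (p, q)" by auto
    have "p < q" "q < length u" "w ! p > w ! q" using pq length_w by (auto simp: inversions_def)
    then show "x \<in> inversions u - E"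
      using pq(2) ij gt w_nth[of p] w_nth[of q]
      by (auto simp: f_def E_def M_def inversions_def split: if_splits)
  qed
  moreover have "inj_on f (inversions w)"
  proof (rule inj_onI)
    fix x y assume x: "x \<in> inversions w" and y: "y \<in> inversions w" and e: "f x = f y"
    obtain p q p' q' where [simp]: "x = (p, q)" "y = (p', q')" by force
    have "p < q" "q < length u" "w ! p > w ! q" "p' < q'" "q' < length u" "w ! p' > w ! q'"
      using x y length_w by (auto simp: inversions_def)
    then show "x = y"
      using e ij gt w_nth[of p] w_nth[of q] w_nth[of p'] w_nth[of q']
      by (auto simp: f_def inversions_def split: if_splits)
  qed
  ultimately have "card (inversions w) \<le> card (inversions u - E)"
    using finite_inversions by (metis card_image card_mono finite_Diff)
  also have "\<dots> = card (inversions u) - card E"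
    using E_sub finite_inversions by (simp add: card_Diff_subset finite_subset)
  finally show ?thesis
    using card_E card_mono[OF finite_inversions E_sub] unfolding w_def by linarith
qed

lemma cover_swap_values:
  assumes "distinct x" "1 \<le> a" "a < b" "b \<le> length x" "ninv (swap x a b) = ninv x + 1"
  shows "x ! (a - 1) < x ! (b - 1)"
    and "a < m \<Longrightarrow> m < b \<Longrightarrow> \<not> (x ! (a - 1) < x ! (m - 1) \<and> x ! (m - 1) < x ! (b - 1))"
proof -
  show lt: "x ! (a - 1) < x ! (b - 1)"
  proof (rule ccontr)
    assume "\<not> ?thesis"
    then have "x ! (b - 1) < x ! (a - 1)"
      using distinct_nth_pred_eq_iff[OF assms(1), of a b] assms by linarith
    then have "ninv (swap x a b) + 1 \<le> ninv x"
      using card_inversions_swap_le[of "a - 1" "b - 1" x] assms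
      unfolding ninv_eq_card_inversions swap_def by fastforce
    then show False using assms by simp
  qed
  assume m: "a < m" "m < b"
  show "\<not> (x ! (a - 1) < x ! (m - 1) \<and> x ! (m - 1) < x ! (b - 1))"
  proof
    assume between: "x ! (a - 1) < x ! (m - 1) \<and> x ! (m - 1) < x ! (b - 1)"
    define z where "z = swap x a b"
    have z_nth: "z ! (a - 1) = x ! (b - 1)" "z ! (b - 1) = x ! (a - 1)" "z ! (m - 1) = x ! (m - 1)"
      using assms m by (auto simp: z_def swap_nth)
    define M where "M = {m'. a - 1 < m' \<and> m' < b - 1 \<and> z ! (b - 1) < z ! m' \<and> z ! m' < z ! (a - 1)}"
    have "a - 1 < m - 1" "m - 1 < b - 1" using m assms by linarith+
    then have "m - 1 \<in> M" using between z_nth by (simp add: M_def)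
    moreover have "finite M" by (rule finite_subset[of _ "{..<b - 1}"]) (auto simp: M_def)
    ultimately have "card M \<ge> 1" by (simp add: Suc_le_eq card_gt_0_iff) blast
    have "card (inversions (z[a - 1 := z ! (b - 1), b - 1 := z ! (a - 1)])) + 1 + card M
        \<le> card (inversions z)"
      unfolding M_def using z_nth lt assms
      by (intro card_inversions_swap_le) (simp_all add: z_def, linarith+)
    moreover have "z[a - 1 := z ! (b - 1), b - 1 := z ! (a - 1)] = x"
      using swap_swap[of a x b] assms by (simp add: z_def swap_def[of "swap x a b"])
    ultimately have "ninv x + 2 \<le> ninv z"
      using \<open>card M \<ge> 1\<close> by (simp add: ninv_eq_card_inversions)
    then show False using assms by (simp add: z_def)
  qed
qed

section \<open>Sequences of transpositions straddling k\<close>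

fun apply_swaps :: "nat list \<Rightarrow> (nat \<times> nat) list \<Rightarrow> nat list" where
  "apply_swaps x [] = x"
| "apply_swaps x ((a, b) # qs) = apply_swaps (swap x a b) qs"

definition straddles :: "nat \<Rightarrow> nat \<Rightarrow> (nat \<times> nat) list \<Rightarrow> bool" where
  "straddles k n qs \<longleftrightarrow> (\<forall>(a, b) \<in> set qs. 1 \<le> a \<and> a \<le> k \<and> k < b \<and> b \<le> n)"

fun kcover_path :: "nat \<Rightarrow> nat list \<Rightarrow> (nat \<times> nat) list \<Rightarrow> bool" where
  "kcover_path k x [] = True"
| "kcover_path k x ((a, b) # qs) \<longleftrightarrow> 1 \<le> a \<and> a \<le> k \<and> k < b \<and> b \<le> length x \<and>
     ninv (swap x a b) = ninv x + 1 \<and> kcover_path k (swap x a b) qs"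

fun exch_values :: "nat list \<Rightarrow> (nat \<times> nat) list \<Rightarrow> nat list" where
  "exch_values x [] = []"
| "exch_values x ((a, b) # qs) = x ! (a - 1) # exch_values (swap x a b) qs"

text \<open>Positions are 0-indexed here: in the 1-indexed language of the paper, the entries in
  positions k + 1, ..., n decrease.\<close>
definition decreasing_after :: "nat \<Rightarrow> nat list \<Rightarrow> bool" where
  "decreasing_after k y \<longleftrightarrow> (\<forall>p q. k \<le> p \<longrightarrow> p < q \<longrightarrow> q < length y \<longrightarrow> y ! q < y ! p)"

lemma straddles_Nil [simp]: "straddles k n []"
  by (simp add: straddles_def)

lemma straddles_Cons [simp]:
  "straddles k n ((a, b) # qs) \<longleftrightarrow> 1 \<le> a \<and> a \<le> k \<and> k < b \<and> b \<le> n \<and> straddles k n qs"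
  by (auto simp: straddles_def)

lemma straddles_rev [simp]: "straddles k n (rev qs) \<longleftrightarrow> straddles k n qs"
  by (auto simp: straddles_def)

lemma length_apply_swaps [simp]: "length (apply_swaps x qs) = length x"
  by (induction x qs rule: apply_swaps.induct) auto

lemma apply_swaps_append: "apply_swaps x (qs @ rs) = apply_swaps (apply_swaps x qs) rs"
  by (induction x qs rule: apply_swaps.induct) auto

lemma foldl_swap_eq_apply_swaps: "foldl (\<lambda>u (a, b). swap u a b) x qs = apply_swaps x qs"
  by (induction x qs rule: apply_swaps.induct) auto

lemma distinct_apply_swaps: "straddles k (length x) qs \<Longrightarrow> distinct (apply_swaps x qs) = distinct x"
  by (induction x qs rule: apply_swaps.induct) (auto simp: distinct_swap)

lemma set_apply_swaps: "straddles k (length x) qs \<Longrightarrow> set (apply_swaps x qs) = set x"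
  by (induction x qs rule: apply_swaps.induct) (auto simp: set_swap)

lemma apply_swaps_perms: "straddles k n qs \<Longrightarrow> x \<in> perms n \<Longrightarrow> apply_swaps x qs \<in> perms n"
  using distinct_apply_swaps[of k x qs] set_apply_swaps[of k x qs] perms_length[of x n]
  by (simp add: perms_def)

lemma apply_swaps_rev: "straddles k (length x) qs \<Longrightarrow> apply_swaps (apply_swaps x qs) (rev qs) = x"
  by (induction x qs rule: apply_swaps.induct) (auto simp: apply_swaps_append swap_swap)

lemma apply_swaps_nth_untouched:
  "straddles k (length x) qs \<Longrightarrow> k < p \<Longrightarrow> p \<notin> snd ` set qs \<Longrightarrow>
   apply_swaps x qs ! (p - 1) = x ! (p - 1)"
  by (induction x qs rule: apply_swaps.induct) (auto simp: swap_def nth_list_update_neq)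

lemma apply_swaps_nth_first:
  assumes "straddles k (length x) ((a, b) # qs)" "sorted_wrt (>) (map snd ((a, b) # qs))"
  shows "apply_swaps x ((a, b) # qs) ! (b - 1) = x ! (a - 1)"
proof -
  have "apply_swaps (swap x a b) qs ! (b - 1) = swap x a b ! (b - 1)"
    using assms by (intro apply_swaps_nth_untouched[of k]) auto
  then show ?thesis using assms swap_nth_right[of b x a] by auto
qed

lemma kcover_path_straddles: "kcover_path k x qs \<Longrightarrow> straddles k (length x) qs"
  by (induction k x qs rule: kcover_path.induct) auto

lemma kcover_path_append:
  "kcover_path k x (qs @ rs) \<longleftrightarrow> kcover_path k x qs \<and> kcover_path k (apply_swaps x qs) rs"
  by (induction k x qs rule: kcover_path.induct) auto

lemma decreasing_after_mono: "decreasing_after k y \<Longrightarrow> k \<le> k' \<Longrightarrow> decreasing_after k' y"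
  unfolding decreasing_after_def by auto

text \<open>Within the tail only position b changes, from x_a up to x_b, and the cover condition
  leaves no tail entry strictly between the two.\<close>
lemma decreasing_after_swap_cover:
  assumes dec: "decreasing_after k (swap x a b)" and "distinct x"
    and ab: "1 \<le> a" "a \<le> k" "k < b" "b \<le> length x" and "ninv (swap x a b) = ninv x + 1"
  shows "decreasing_after k x"
  unfolding decreasing_after_def
proof (intro allI impI)
  fix p q assume pq: "k \<le> p" "p < q" "q < length x"
  have lt: "x ! (a - 1) < x ! (b - 1)"
    and between: "\<And>m. a < m \<Longrightarrow> m < b \<Longrightarrow> \<not> (x ! (a - 1) < x ! (m - 1) \<and> x ! (m - 1) < x ! (b - 1))"
    using cover_swap_values[OF assms(2) ab(1) _ ab(4)] assms by auto
  have swap_nth_off: "\<And>t. t < length x \<Longrightarrow> t \<noteq> b - 1 \<Longrightarrow> k \<le> t \<Longrightarrow> swap x a b ! t = x ! t"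
    and swap_nth_b: "swap x a b ! (b - 1) = x ! (a - 1)"
    using ab by (auto simp: swap_nth)
  have dec': "swap x a b ! q < swap x a b ! p"
    using dec pq by (simp add: decreasing_after_def)
  consider "p \<noteq> b - 1" "q \<noteq> b - 1" | "p = b - 1" | "q = b - 1" by blast
  then show "x ! q < x ! p"
  proof cases
    case 1 then show ?thesis using dec' swap_nth_off[of p] swap_nth_off[of q] pq by simp
  next
    case 2 then show ?thesis using dec' swap_nth_off[of q] swap_nth_b pq lt by simp
  next
    case 3
    have "x ! (a - 1) < x ! p" using dec' swap_nth_off[of p] swap_nth_b pq 3 by simp
    moreover have "\<not> (x ! (a - 1) < x ! p \<and> x ! p < x ! (b - 1))"
      using between[of "Suc p"] pq 3 ab by simp
    moreover have "x ! p \<noteq> x ! (b - 1)" using \<open>distinct x\<close> pq 3 by (simp add: nth_eq_iff_index_eq)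
    ultimately show ?thesis using 3 by auto
  qed
qed

lemma decreasing_after_kcover_path:
  "kcover_path k x qs \<Longrightarrow> distinct x \<Longrightarrow> decreasing_after k (apply_swaps x qs) \<Longrightarrow> decreasing_after k x"
proof (induction k x qs rule: kcover_path.induct)
  case (2 k x a b qs)
  then show ?case using decreasing_after_swap_cover by (auto simp: distinct_swap)
qed simp

text \<open>Since the later positions b' are smaller than b but exceed k, position b keeps the
  value x_a to the end, while position b' ends up with the next exchanged value; the
  decreasing tail of the final permutation orders the two.\<close>
lemma kcover_path_exch_values_sorted:
  "kcover_path k x qs \<Longrightarrow> distinct x \<Longrightarrow> decreasing_after k (apply_swaps x qs) \<Longrightarrow>
   sorted_wrt (>) (map snd qs) \<Longrightarrow> sorted_wrt (<) (exch_values x qs)"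
proof (induction k x qs rule: kcover_path.induct)
  case (2 k x a b qs)
  define x1 where "x1 = swap x a b"
  have IH: "sorted_wrt (<) (exch_values x1 qs)"
    using 2 by (simp add: x1_def distinct_swap)
  show ?case
  proof (cases qs)
    case (Cons q r)
    obtain a' b' where q: "q = (a', b')" by force
    have straddle: "straddles k (length x) ((a, b) # qs)"
      using kcover_path_straddles[OF "2.prems"(1)] .
    have b_final: "apply_swaps x ((a, b) # qs) ! (b - 1) = x ! (a - 1)"
      using apply_swaps_nth_first[OF straddle] "2.prems"(4) by blast
    have b'_final: "apply_swaps x1 ((a', b') # r) ! (b' - 1) = x1 ! (a' - 1)"
      using apply_swaps_nth_first[of k x1 a' b' r] straddle "2.prems"(4) Cons q by (simp add: x1_def)
    have "k \<le> b' - 1" "b' - 1 < b - 1" "b - 1 < length (apply_swaps x1 qs)"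
      using "2.prems"(4) straddle Cons q by (auto simp: x1_def)
    then have "apply_swaps x1 qs ! (b - 1) < apply_swaps x1 qs ! (b' - 1)"
      using "2.prems"(3) unfolding decreasing_after_def by (simp add: x1_def)
    then have "x ! (a - 1) < x1 ! (a' - 1)" using b_final b'_final Cons q by (simp add: x1_def)
    then show ?thesis using IH Cons q by (simp add: x1_def) (meson less_trans)
  qed simp
qed simp

lemma kcover_path_Cons_first_value_less:
  assumes path: "kcover_path k x ((a, b) # qs)" and "distinct x"
    and sorted_values: "sorted_wrt (<) (exch_values x ((a, b) # qs))"
    and below: "\<forall>p\<in>snd ` set qs. hd (exch_values (swap x a b) qs) < swap x a b ! (p - 1)"
  shows "\<forall>p\<in>snd ` set ((a, b) # qs). x ! (a - 1) < x ! (p - 1)"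
proof
  fix p assume p: "p \<in> snd ` set ((a, b) # qs)"
  have ab: "1 \<le> a" "a \<le> k" "k < b" "b \<le> length x" "ninv (swap x a b) = ninv x + 1"
    using path by auto
  show "x ! (a - 1) < x ! (p - 1)"
  proof (cases "p = b")
    case True
    then show ?thesis using cover_swap_values(1)[OF \<open>distinct x\<close> ab(1) _ ab(4)] ab by simp
  next
    case False
    then have "p \<in> snd ` set qs" using p by simp
    moreover have "straddles k (length x) qs" using kcover_path_straddles[OF path] by simp
    ultimately have "k < p" "p \<le> length x" "qs \<noteq> []" unfolding straddles_def by auto
    then have "swap x a b ! (p - 1) = x ! (p - 1)" "x ! (a - 1) < hd (exch_values (swap x a b) qs)"
      using False ab sorted_values by (auto simp: swap_nth neq_Nil_conv)
    then show ?thesis using below \<open>p \<in> snd ` set qs\<close> by fastforce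
  qed
qed

text \<open>If a later position b' exceeded b, the final permutation would carry the larger
  exchanged value at b' and the smaller one x_a at b, against its decreasing tail.\<close>
lemma kcover_path_Cons_positions_sorted:
  assumes path: "kcover_path k x ((a, b) # qs)"
    and dec: "decreasing_after k (apply_swaps x ((a, b) # qs))"
    and sorted_values: "sorted_wrt (<) (exch_values x ((a, b) # qs))"
    and sorted: "sorted_wrt (>) (map snd qs)"
    and below: "\<forall>p\<in>snd ` set qs. hd (exch_values (swap x a b) qs) < swap x a b ! (p - 1)"
  shows "sorted_wrt (>) (map snd ((a, b) # qs))"
proof (cases qs)
  case (Cons q r)
  obtain a' b' where q: "q = (a', b')" by force
  define x1 where "x1 = swap x a b"
  have ab: "1 \<le> a" "a \<le> k" "k < b" "b \<le> length x" using path by auto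
  have "kcover_path k x1 qs" using path by (simp add: x1_def)
  then have straddle: "straddles k (length x1) qs" by (rule kcover_path_straddles)
  have x1_b: "x1 ! (b - 1) = x ! (a - 1)" using ab swap_nth_right[of b x a] by (simp add: x1_def)
  have less_next: "x ! (a - 1) < x1 ! (a' - 1)" using sorted_values Cons q by (simp add: x1_def)
  have b_unused: "b \<notin> snd ` set qs"
  proof
    assume "b \<in> snd ` set qs"
    then have "x1 ! (a' - 1) < x1 ! (b - 1)" using below Cons q by (auto simp: x1_def)
    then show False using x1_b less_next by simp
  qed
  have b_final: "apply_swaps x1 qs ! (b - 1) = x ! (a - 1)"
    using apply_swaps_nth_untouched[OF straddle ab(3) b_unused] x1_b by simp
  have b'_final: "apply_swaps x1 qs ! (b' - 1) = x1 ! (a' - 1)"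
    using apply_swaps_nth_first[of k x1 a' b' r] straddle sorted Cons q by simp
  have b': "k < b'" "b' \<le> length x" "b' \<noteq> b" using straddle b_unused Cons q by (auto simp: x1_def)
  have "b' < b"
  proof (rule ccontr)
    assume "\<not> b' < b"
    then have "apply_swaps x1 qs ! (b' - 1) < apply_swaps x1 qs ! (b - 1)"
      using dec ab b' unfolding decreasing_after_def by (simp add: x1_def)
    then show False using b_final b'_final less_next by simp
  qed
  then show ?thesis using sorted Cons q by auto
qed simp

lemma kcover_path_positions_sorted:
  assumes "kcover_path k x qs" "distinct x" "decreasing_after k (apply_swaps x qs)"
    and "sorted_wrt (<) (exch_values x qs)"
  shows "sorted_wrt (>) (map snd qs)"
proof -
  have "sorted_wrt (>) (map snd qs) \<and> (\<forall>p\<in>snd ` set qs. hd (exch_values x qs) < x ! (p - 1))"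
    using assms
  proof (induction k x qs rule: kcover_path.induct)
    case (2 k x a b qs)
    then have "sorted_wrt (>) (map snd qs) \<and>
        (\<forall>p\<in>snd ` set qs. hd (exch_values (swap x a b) qs) < swap x a b ! (p - 1))"
      by (simp add: distinct_swap)
    then show ?case
      using kcover_path_Cons_positions_sorted[OF "2.prems"(1,3,4)]
        kcover_path_Cons_first_value_less[OF "2.prems"(1,2,4)] by simp
  qed simp
  then show ?thesis by blast
qed

lemma last_moved_position:
  assumes "distinct x" "straddles k (length x) ((a, b) # qs)" "sorted_wrt (>) (map snd ((a, b) # qs))"
  shows "apply_swaps x ((a, b) # qs) ! (b - 1) \<noteq> x ! (b - 1)"
    and "b < p \<Longrightarrow> apply_swaps x ((a, b) # qs) ! (p - 1) = x ! (p - 1)"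
proof -
  show "apply_swaps x ((a, b) # qs) ! (b - 1) \<noteq> x ! (b - 1)"
    using apply_swaps_nth_first[OF assms(2,3)] distinct_nth_pred_eq_iff[OF assms(1), of a b] assms(2)
    by auto
  assume "b < p"
  then show "apply_swaps x ((a, b) # qs) ! (p - 1) = x ! (p - 1)"
    using assms(2,3) by (intro apply_swaps_nth_untouched[of k]) auto
qed

text \<open>The largest moved position is b_1 and it ends up holding x_{a_1}, so the endpoints
  determine the first transposition.\<close>
lemma straddling_swaps_unique:
  "distinct x \<Longrightarrow> straddles k (length x) qs \<Longrightarrow> straddles k (length x) qs' \<Longrightarrow>
   sorted_wrt (>) (map snd qs) \<Longrightarrow> sorted_wrt (>) (map snd qs') \<Longrightarrow>
   apply_swaps x qs = apply_swaps x qs' \<Longrightarrow> qs = qs'"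
proof (induction qs arbitrary: x qs')
  case Nil
  show ?case
  proof (cases qs')
    case (Cons q' rs')
    obtain a' b' where "q' = (a', b')" by force
    then show ?thesis using Nil.prems last_moved_position(1)[of x k a' b' rs'] Cons by simp
  qed simp
next
  case (Cons q rs)
  obtain a b where q: "q = (a, b)" by force
  show ?case
  proof (cases qs')
    case Nil
    then show ?thesis using Cons.prems last_moved_position(1)[of x k a b rs] q by simp
  next
    case (Cons q' rs')
    obtain a' b' where q': "q' = (a', b')" by force
    note prems = Cons.prems[unfolded q q' Cons]
    have "b = b'"
    proof (rule ccontr)
      assume "b \<noteq> b'"
      then consider "b < b'" | "b' < b" by linarith
      then show False
        using last_moved_position[OF prems(1,2,4)] last_moved_position[OF prems(1,3,5)] prems(6)
        by cases metis+
    qed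
    moreover have "a = a'"
      using apply_swaps_nth_first[OF prems(2,4)] apply_swaps_nth_first[OF prems(3,5)] prems(6) \<open>b = b'\<close>
        distinct_nth_pred_eq_iff[OF prems(1), of a a'] prems(2,3) by auto
    ultimately have "rs = rs'"
      using Cons.IH[of "swap x a b" rs'] prems by (simp add: distinct_swap)
    then show ?thesis using q q' Cons \<open>a = a'\<close> \<open>b = b'\<close> by simp
  qed
qed

section \<open>Increasing k-chains\<close>

fun trajectory :: "nat list \<Rightarrow> (nat \<times> nat) list \<Rightarrow> nat list list" where
  "trajectory x [] = [x]"
| "trajectory x ((a, b) # qs) = x # trajectory (swap x a b) qs"

lemma trajectory_Cons_hd: "\<exists>zs. trajectory x qs = x # zs"
  by (cases "(x, qs)" rule: trajectory.cases) auto

lemma trajectory_not_Nil [simp]: "trajectory x qs \<noteq> []"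
  using trajectory_Cons_hd[of x qs] by auto

lemma hd_trajectory [simp]: "hd (trajectory x qs) = x"
  using trajectory_Cons_hd[of x qs] by auto

lemma last_trajectory [simp]: "last (trajectory x qs) = apply_swaps x qs"
  by (induction x qs rule: trajectory.induct) auto

lemma trans_pos_swap:
  assumes "distinct x" "1 \<le> a" "a < b" "b \<le> length x"
  shows "trans_pos x (swap x a b) = (a, b)"
  unfolding trans_pos_def
proof (rule the_equality)
  fix p assume "case p of (i, j) \<Rightarrow> 1 \<le> i \<and> i < j \<and> j \<le> length x \<and> swap x a b = swap x i j"
  then show "p = (a, b)" using swap_eq_swap_imp[OF assms] by (cases p) auto
qed (use assms in simp)

lemma exch_min_swap:
  "distinct x \<Longrightarrow> 1 \<le> a \<Longrightarrow> a < b \<Longrightarrow> b \<le> length x \<Longrightarrow>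
   exch_min x (swap x a b) = min (x ! (a - 1)) (x ! (b - 1))"
  by (simp add: exch_min_def trans_pos_swap)

lemma chain_pairs_Cons: "chain_pairs (x # y # zs) = trans_pos x y # chain_pairs (y # zs)"
proof -
  have "[0..<length (x # y # zs) - 1] = 0 # map Suc [0..<length (y # zs) - 1]"
    by (simp add: upt_conv_Cons map_Suc_upt del: upt_Suc)
  then show ?thesis unfolding chain_pairs_def by simp
qed

lemma chain_pairs_trajectory: "kcover_path k x qs \<Longrightarrow> distinct x \<Longrightarrow> chain_pairs (trajectory x qs) = qs"
proof (induction k x qs rule: kcover_path.induct)
  case (1 k x) then show ?case by (simp add: chain_pairs_def)
next
  case (2 k x a b qs)
  obtain zs where "trajectory (swap x a b) qs = swap x a b # zs"
    using trajectory_Cons_hd by blast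
  then show ?case using 2 by (simp add: chain_pairs_Cons trans_pos_swap distinct_swap)
qed

lemma kchain_Cons: "kchain k (x # y # zs) \<longleftrightarrow> kcover k x y \<and> kchain k (y # zs)"
  unfolding kchain_def by (auto simp: less_Suc_eq_0_disj)

lemma incr_kchain_Cons:
  "incr_kchain k (x # y # zs) \<longleftrightarrow> kcover k x y \<and> incr_kchain k (y # zs) \<and>
     (zs \<noteq> [] \<longrightarrow> exch_min x y < exch_min y (hd zs))"
  unfolding incr_kchain_def kchain_Cons by (cases zs) (auto simp: less_Suc_eq_0_disj)

lemma incr_kchain_singleton: "incr_kchain k [x]"
  by (simp add: incr_kchain_def kchain_def)

lemma kchain_imp_trajectory: "kchain k xs \<Longrightarrow> \<exists>qs. xs = trajectory (hd xs) qs \<and> kcover_path k (hd xs) qs"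
proof (induction xs rule: induct_list012)
  case (3 x y zs)
  obtain qs where "y # zs = trajectory y qs" "kcover_path k y qs"
    using 3 by (auto simp: kchain_Cons)
  moreover obtain i j where "1 \<le> i" "i \<le> k" "k < j" "j \<le> length x" "y = swap x i j" "ninv y = ninv x + 1"
    using 3 by (auto simp: kchain_Cons kcover_def)
  ultimately show ?case by (intro exI[of _ "(i, j) # qs"]) auto
qed (auto simp: kchain_def intro: exI[of _ "[]"])

lemma exch_min_cover_swap:
  "distinct x \<Longrightarrow> 1 \<le> a \<Longrightarrow> a < b \<Longrightarrow> b \<le> length x \<Longrightarrow> ninv (swap x a b) = ninv x + 1 \<Longrightarrow>
   exch_min x (swap x a b) = x ! (a - 1)"
  using exch_min_swap cover_swap_values(1) by fastforce

lemma incr_kchain_trajectory_iff: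
  "kcover_path k x qs \<Longrightarrow> distinct x \<Longrightarrow> incr_kchain k (trajectory x qs) \<longleftrightarrow> sorted_wrt (<) (exch_values x qs)"
proof (induction k x qs rule: kcover_path.induct)
  case (1 k x) then show ?case by (simp add: incr_kchain_singleton)
next
  case (2 k x a b qs)
  define x1 where "x1 = swap x a b"
  have ab: "1 \<le> a" "a \<le> k" "k < b" "b \<le> length x" and cov: "ninv x1 = ninv x + 1"
    and path: "kcover_path k x1 qs" and distinct_x1: "distinct x1"
    using "2.prems" by (auto simp: x1_def distinct_swap)
  have step: "kcover k x x1" unfolding kcover_def x1_def using ab cov x1_def by blast
  have first: "exch_min x x1 = x ! (a - 1)"
    using exch_min_cover_swap[OF "2.prems"(2) ab(1) _ ab(4)] ab cov by (simp add: x1_def)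
  have IH: "incr_kchain k (trajectory x1 qs) \<longleftrightarrow> sorted_wrt (<) (exch_values x1 qs)"
    using "2.IH" "2.prems" path distinct_x1 by (simp add: x1_def)
  show ?case
  proof (cases qs)
    case Nil
    then show ?thesis using step by (simp add: x1_def incr_kchain_Cons incr_kchain_singleton)
  next
    case (Cons q rs)
    obtain a' b' where q: "q = (a', b')" by force
    have "exch_min x1 (swap x1 a' b') = x1 ! (a' - 1)"
      using exch_min_cover_swap[OF distinct_x1] path Cons q by auto
    moreover obtain zs where "trajectory (swap x1 a' b') rs = swap x1 a' b' # zs"
      using trajectory_Cons_hd by blast
    ultimately show ?thesis
      using step first IH Cons q by (auto simp: x1_def incr_kchain_Cons intro: less_trans)
  qed
qed

lemma incr_kchain_from_imp_trajectory:
  assumes chain: "incr_kchain_from k x y xs" and y: "y \<in> perms n" "decreasing_after k y"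
  obtains qs where "xs = trajectory x qs" "kcover_path k x qs" "sorted_wrt (>) (map snd qs)"
    "apply_swaps x qs = y" "x \<in> perms n" "decreasing_after k x"
proof -
  obtain qs where xs: "xs = trajectory x qs" and path: "kcover_path k x qs"
    using kchain_imp_trajectory[of k xs] chain by (auto simp: incr_kchain_from_def incr_kchain_def)
  have y_eq: "apply_swaps x qs = y" using chain xs by (simp add: incr_kchain_from_def)
  have straddle: "straddles k n qs"
    using kcover_path_straddles[OF path] perms_length[OF y(1)] y_eq by auto
  have "apply_swaps y (rev qs) = x"
    using apply_swaps_rev[of k x qs] kcover_path_straddles[OF path] y_eq by simp
  then have x: "x \<in> perms n" using apply_swaps_perms[of k n "rev qs" y] straddle y(1) by simp
  then have "distinct x" by (simp add: perms_def)
  then have "sorted_wrt (>) (map snd qs)"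
    using kcover_path_positions_sorted[OF path] incr_kchain_trajectory_iff[OF path] chain xs y_eq y(2)
    by (simp add: incr_kchain_from_def)
  then show ?thesis
    using that xs path y_eq x decreasing_after_kcover_path[OF path \<open>distinct x\<close>] y(2) by simp
qed

lemma the_incr_kchain_from:
  assumes "incr_kchain_from k x y xs" "y \<in> perms n" "decreasing_after k y"
  shows "(THE xs. incr_kchain_from k x y xs) = xs"
proof (rule the_equality)
  fix xs' assume "incr_kchain_from k x y xs'"
  obtain qs' where "xs' = trajectory x qs'" "kcover_path k x qs'" "sorted_wrt (>) (map snd qs')"
    "apply_swaps x qs' = y"
    using incr_kchain_from_imp_trajectory[OF \<open>incr_kchain_from k x y xs'\<close> assms(2,3)] by blast
  moreover obtain qs where "xs = trajectory x qs" "kcover_path k x qs" "sorted_wrt (>) (map snd qs)"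
    "apply_swaps x qs = y" "x \<in> perms n"
    using incr_kchain_from_imp_trajectory[OF assms] by blast
  ultimately show "xs' = xs"
    using straddling_swaps_unique[of x k qs qs'] kcover_path_straddles by (simp add: perms_def)
qed (fact assms(1))

lemma trajectory_incr_kchain_from:
  "kcover_path k x qs \<Longrightarrow> distinct x \<Longrightarrow> decreasing_after k (apply_swaps x qs) \<Longrightarrow>
   sorted_wrt (>) (map snd qs) \<Longrightarrow> incr_kchain_from k x (apply_swaps x qs) (trajectory x qs)"
  using incr_kchain_trajectory_iff kcover_path_exch_values_sorted
  unfolding incr_kchain_from_def by simp

section \<open>Rows of flagged tableaux\<close>

text \<open>Row k of T read right to left, as in the reading word; the cell in column c
  contributes the pair (a, b) with b = n + 1 - c, so b increases along the row.\<close>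
definition tableau_row :: "nat \<Rightarrow> tableau \<Rightarrow> nat \<Rightarrow> (nat \<times> nat) list" where
  "tableau_row n T k =
     concat (map (\<lambda>b. case T (k, n + 1 - b) of None \<Rightarrow> [] | Some a \<Rightarrow> [(a, b)]) [k + 1..<n + 1])"

lemma reading_word_eq_concat_rows: "reading_word n T = concat (map (tableau_row n T) [1..<n])"
proof -
  have "rev [1..<n + 1 - k] = map (\<lambda>b. n + 1 - b) [k + 1..<n + 1]" for k
    by (rule nth_equalityI) (auto simp del: upt_Suc simp add: rev_nth nth_upt)
  then show ?thesis
    unfolding reading_word_def tableau_row_def
    by (auto intro!: arg_cong[where f = concat] map_cong split: option.splits)
qed

lemma mem_tableau_row: "(a, b) \<in> set (tableau_row n T k) \<longleftrightarrow> k < b \<and> b \<le> n \<and> T (k, n + 1 - b) = Some a"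
proof -
  have "(a, b) \<in> set (case T (k, n + 1 - b') of None \<Rightarrow> [] | Some a' \<Rightarrow> [(a', b')])
      \<longleftrightarrow> b = b' \<and> T (k, n + 1 - b') = Some a" for b'
    by (cases "T (k, n + 1 - b')") auto
  then show ?thesis unfolding tableau_row_def set_concat set_map by (simp del: upt_Suc) fastforce
qed

lemma sorted_tableau_row: "sorted_wrt (<) (map snd (tableau_row n T k))"
proof -
  have "map snd (concat (map (\<lambda>b. case T (k, n + 1 - b) of None \<Rightarrow> [] | Some a \<Rightarrow> [(a, b)]) bs))
      = filter (\<lambda>b. T (k, n + 1 - b) \<noteq> None) bs" for bs
    by (induction bs) (auto split: option.splits)
  then show ?thesis unfolding tableau_row_def by (simp del: upt_Suc add: sorted_wrt_filter)
qed

lemma snd_sorted_list_unique: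
  fixes xs ys :: "('a \<times> nat) list"
  assumes "sorted_wrt (<) (map snd xs)" "sorted_wrt (<) (map snd ys)" "set xs = set ys"
  shows "xs = ys"
proof (rule map_sorted_distinct_set_unique[of snd])
  show "inj_on snd (set xs \<union> set ys)"
    using assms by (simp add: strict_sorted_iff distinct_map)
qed (use assms in \<open>simp_all add: strict_sorted_iff\<close>)

lemma flagged_if_rows_straddle:
  assumes support: "\<forall>i j. T (i, j) \<noteq> None \<longrightarrow> 1 \<le> i \<and> 1 \<le> j \<and> i + j \<le> n"
    and rows: "\<forall>k \<in> {1..<n}. straddles k n (tableau_row n T k)"
  shows "flagged n T"
proof -
  have "1 \<le> a \<and> a \<le> i" if T: "T (i, j) = Some a" for i j a
  proof -
    have ij: "1 \<le> i" "1 \<le> j" "i + j \<le> n" using support T by auto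
    moreover have "i < n + 1 - j" "n + 1 - j \<le> n" using ij by linarith+
    ultimately have "(a, n + 1 - j) \<in> set (tableau_row n T i)" using T by (simp add: mem_tableau_row)
    then show ?thesis using rows ij unfolding straddles_def by fastforce
  qed
  then show ?thesis using support unfolding flagged_def by blast
qed

lemma flagged_outside: "flagged n T \<Longrightarrow> \<not> (1 \<le> i \<and> 1 \<le> j \<and> i + j \<le> n) \<Longrightarrow> T (i, j) = None"
  unfolding flagged_def by blast

lemma flagged_eqI:
  assumes "flagged n T" "flagged n T'" and rows: "\<forall>k \<in> {1..<n}. tableau_row n T k = tableau_row n T' k"
  shows "T = T'"
proof -
  have "T (i, j) = T' (i, j)" for i j
  proof (cases "1 \<le> i \<and> 1 \<le> j \<and> i + j \<le> n")
    case True
    then have "i < n + 1 - j" "n + 1 - j \<le> n" "n + 1 - (n + 1 - j) = j" "i \<in> {1..<n}" by auto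
    then have "T (i, j) = Some a \<longleftrightarrow> T' (i, j) = Some a" for a
      using mem_tableau_row[of a "n + 1 - j" n T i] mem_tableau_row[of a "n + 1 - j" n T' i] rows
      by simp
    then show ?thesis by (metis option.exhaust)
  next
    case False
    then show ?thesis using flagged_outside[OF assms(1)] flagged_outside[OF assms(2)] by simp
  qed
  then show ?thesis by auto
qed

fun cover_descent :: "nat list \<Rightarrow> (nat \<times> nat) list \<Rightarrow> bool" where
  "cover_descent y [] = True"
| "cover_descent y ((a, b) # ps) \<longleftrightarrow> cover (swap y a b) y \<and> cover_descent (swap y a b) ps"

lemma cover_descent_append:
  "cover_descent y (ps @ qs) \<longleftrightarrow> cover_descent y ps \<and> cover_descent (apply_swaps y ps) qs"
  by (induction y ps rule: cover_descent.induct) auto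

lemma ball_atLeastAtMost_1_iff: "(\<forall>s \<in> {1..n}. P s) \<longleftrightarrow> (\<forall>s < n. P (Suc s))"
proof
  assume all: "\<forall>s < n. P (Suc s)"
  show "\<forall>s \<in> {1..n}. P s"
  proof
    fix s assume "s \<in> {1..n}"
    then obtain t where "s = Suc t" "t < n" by (cases s) auto
    then show "P s" using all by simp
  qed
qed auto

lemma cover_descent_iff_prefixes:
  "cover_descent y ps \<longleftrightarrow>
     (\<forall>s \<in> {1..length ps}. cover (apply_swaps y (take s ps)) (apply_swaps y (take (s - 1) ps)))"
  unfolding ball_atLeastAtMost_1_iff
  by (induction y ps rule: cover_descent.induct) (auto simp: All_less_Suc2)

lemma associated_iff_cover_descent:
  "associated n T w \<longleftrightarrow> cover_descent (w0 n) (reading_word n T) \<and> apply_swaps (w0 n) (reading_word n T) = w"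
  unfolding associated_def Let_def foldl_swap_eq_apply_swaps cover_descent_iff_prefixes by simp

lemma cover_descent_iff_kcover_path:
  "straddles k (length y) ps \<Longrightarrow> cover_descent y ps \<longleftrightarrow> kcover_path k (apply_swaps y ps) (rev ps)"
proof (induction y ps rule: cover_descent.induct)
  case (2 y a b ps)
  define y1 where "y1 = swap y a b"
  have ab: "1 \<le> a" "a \<le> k" "k < b" "b \<le> length y" and straddle: "straddles k (length y1) ps"
    using "2.prems" by (auto simp: y1_def)
  have swap_back: "swap y1 a b = y" using ab by (simp add: y1_def swap_swap)
  have "cover y1 y \<longleftrightarrow> ninv y = ninv y1 + 1"
  proof
    assume "ninv y = ninv y1 + 1"
    then show "cover y1 y"
      unfolding cover_def using ab swap_back by (intro exI[of _ a] exI[of _ b]) (auto simp: y1_def)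
  qed (auto simp: cover_def)
  moreover have "kcover_path k (apply_swaps y ((a, b) # ps)) (rev ((a, b) # ps)) \<longleftrightarrow>
      kcover_path k (apply_swaps y1 ps) (rev ps) \<and> ninv y = ninv y1 + 1"
    using apply_swaps_rev[OF straddle] ab swap_back by (simp add: y1_def kcover_path_append)
  ultimately show ?case using "2.IH" straddle by (auto simp: y1_def)
qed simp

section \<open>The bijection\<close>

lemma w0_in_perms: "w0 n \<in> perms n"
  by (auto simp: w0_def perms_def)

lemma decreasing_after_w0: "decreasing_after k (w0 n)"
  by (auto simp: decreasing_after_def w0_def rev_nth nth_upt simp del: upt_Suc)

lemma nth_rev_upt_1: "s < n - 1 \<Longrightarrow> rev [1..<n] ! s = n - 1 - s"
  by (simp add: rev_nth nth_upt del: upt_Suc)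

lemma cover_descent_row_imp_incr_kchain:
  assumes y: "y \<in> perms n" "decreasing_after k y"
    and ps: "straddles k n ps" "cover_descent y ps" "sorted_wrt (<) (map snd ps)"
  defines "x \<equiv> apply_swaps y ps"
  shows "x \<in> perms n" "decreasing_after k x" "kcover_path k x (rev ps)"
    and "incr_kchain_from k x y (trajectory x (rev ps))"
proof -
  have straddle: "straddles k (length y) ps" using ps(1) perms_length[OF y(1)] by simp
  show path: "kcover_path k x (rev ps)"
    using cover_descent_iff_kcover_path[OF straddle] ps(2) by (simp add: x_def)
  show x: "x \<in> perms n" using apply_swaps_perms[OF ps(1) y(1)] by (simp add: x_def)
  then have "distinct x" by (simp add: perms_def)
  moreover have back_to_y: "apply_swaps x (rev ps) = y" using apply_swaps_rev[OF straddle] by (simp add: x_def)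
  ultimately show "decreasing_after k x" using decreasing_after_kcover_path[OF path] y(2) by simp
  have "sorted_wrt (>) (map snd (rev ps))" using ps(3) by (simp add: rev_map[symmetric] sorted_wrt_rev)
  then show "incr_kchain_from k x y (trajectory x (rev ps))"
    using trajectory_incr_kchain_from[OF path \<open>distinct x\<close>] back_to_y y(2) by simp
qed

lemma distinct_snd_imp_fst_eq:
  "distinct (map snd qs) \<Longrightarrow> (a, b) \<in> set qs \<Longrightarrow> (a', b) \<in> set qs \<Longrightarrow> a = a'"
  using inj_onD[of snd "set qs" "(a, b)" "(a', b)"] by (simp add: distinct_map)

lemma cell_lookup_eq_Some_iff:
  assumes "distinct (map snd qs)"
  shows "(if \<exists>a. (a, b) \<in> set qs then Some (THE a. (a, b) \<in> set qs) else None) = Some a \<longleftrightarrow>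
    (a, b) \<in> set qs"
proof (cases "\<exists>a. (a, b) \<in> set qs")
  case True
  then obtain a0 where a0: "(a0, b) \<in> set qs" by blast
  then have "(THE a. (a, b) \<in> set qs) = a0"
    using distinct_snd_imp_fst_eq[OF assms] by blast
  then show ?thesis using a0 distinct_snd_imp_fst_eq[OF assms a0, of a] by auto
qed simp

lemma Psi_support: "Psi n C (k, c) \<noteq> None \<Longrightarrow> 1 \<le> k \<and> k < n \<and> 1 \<le> c \<and> k + c \<le> n"
  by (auto simp: Psi_def Let_def split: if_splits)

lemma tableau_row_Psi:
  assumes k: "1 \<le> k" "k < n"
    and chain: "(THE xs. incr_kchain_from k (C ! (n - 1 - k)) (C ! (n - k)) xs) = trajectory x qs"
    and path: "kcover_path k x qs" and x: "x \<in> perms n" and sorted: "sorted_wrt (>) (map snd qs)"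
  shows "tableau_row n (Psi n C) k = rev qs"
proof (rule snd_sorted_list_unique)
  have "distinct x" using x by (simp add: perms_def)
  then have pairs: "chain_pairs (trajectory x qs) = qs" using chain_pairs_trajectory[OF path] by simp
  have sorted_rev: "sorted_wrt (<) (map snd (rev qs))" using sorted by (simp add: rev_map[symmetric] sorted_wrt_rev)
  then have distinct_snd: "distinct (map snd qs)" by (simp add: strict_sorted_iff rev_map[symmetric])
  have straddle: "straddles k n qs" using kcover_path_straddles[OF path] perms_length[OF x] by simp
  have "(a, b) \<in> set (tableau_row n (Psi n C) k) \<longleftrightarrow> (a, b) \<in> set qs" for a b
  proof (cases "k < b \<and> b \<le> n")
    case True
    then have "1 \<le> n + 1 - b" "k + (n + 1 - b) \<le> n" "n + 1 - (n + 1 - b) = b" by auto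
    then have "Psi n C (k, n + 1 - b) =
        (if \<exists>a. (a, b) \<in> set qs then Some (THE a. (a, b) \<in> set qs) else None)"
      using k chain pairs by (simp add: Psi_def Let_def)
    then show ?thesis using True cell_lookup_eq_Some_iff[OF distinct_snd] by (simp add: mem_tableau_row)
  next
    case False
    moreover have "k < b \<and> b \<le> n" if "(a, b) \<in> set qs"
      using straddle that unfolding straddles_def by fastforce
    ultimately show ?thesis by (auto simp: mem_tableau_row)
  qed
  then show "set (tableau_row n (Psi n C) k) = set (rev qs)" by auto
  show "sorted_wrt (<) (map snd (rev qs))" by (fact sorted_rev)
qed (rule sorted_tableau_row)

lemma chains_hd_last:
  assumes "C \<in> chains n w" "1 \<le> n"
  shows "C ! 0 = w" "C ! (n - 1) = w0 n"
proof -
  have "length C = n" "C \<noteq> []" using assms by (auto simp: chains_def)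
  then show "C ! 0 = w" "C ! (n - 1) = w0 n"
    using assms(1) by (auto simp: chains_def hd_conv_nth last_conv_nth)
qed

lemma chains_step:
  assumes "C \<in> chains n w" "1 \<le> k" "k < n"
  shows "\<exists>xs. incr_kchain_from k (C ! (n - 1 - k)) (C ! (n - k)) xs"
proof -
  define s where "s = n - 1 - k"
  have s: "s < length (rev [1..<n])" "rev [1..<n] ! s = k" "s + 1 = n - k"
    using assms(2,3) nth_rev_upt_1[of s n] by (auto simp: s_def)
  then have "\<exists>xs. incr_kchain_from (rev [1..<n] ! s) (C ! s) (C ! (s + 1)) xs"
    using assms(1) unfolding chains_def compatible_def by blast
  then show ?thesis using s by (simp add: s_def)
qed

lemma chains_nth_perms:
  assumes C: "C \<in> chains n w" and "1 \<le> n"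
  shows "j < n \<Longrightarrow> C ! (n - 1 - j) \<in> perms n \<and> decreasing_after (Suc j) (C ! (n - 1 - j))"
proof (induction j)
  case 0
  then show ?case using chains_hd_last[OF assms] w0_in_perms decreasing_after_w0 by simp
next
  case (Suc j)
  obtain xs where chain: "incr_kchain_from (Suc j) (C ! (n - 1 - Suc j)) (C ! (n - Suc j)) xs"
    using chains_step[OF C _ Suc.prems] by auto
  have "n - Suc j = n - 1 - j" by simp
  then have "C ! (n - Suc j) \<in> perms n" "decreasing_after (Suc j) (C ! (n - Suc j))"
    using Suc by simp_all
  then obtain "C ! (n - 1 - Suc j) \<in> perms n" "decreasing_after (Suc j) (C ! (n - 1 - Suc j))"
    using incr_kchain_from_imp_trajectory[OF chain] by blast
  then show ?case by (auto intro: decreasing_after_mono)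
qed

lemma chains_row:
  assumes C: "C \<in> chains n w" and k: "1 \<le> k" "k < n"
  shows "straddles k n (tableau_row n (Psi n C) k)"
    and "cover_descent (C ! (n - k)) (tableau_row n (Psi n C) k)"
    and "apply_swaps (C ! (n - k)) (tableau_row n (Psi n C) k) = C ! (n - 1 - k)"
proof -
  let ?x = "C ! (n - 1 - k)" and ?y = "C ! (n - k)"
  obtain xs where chain: "incr_kchain_from k ?x ?y xs" using chains_step[OF C k] by blast
  have "?y \<in> perms n \<and> decreasing_after k ?y"
    using chains_nth_perms[OF C, of "k - 1"] k by (simp add: Suc_diff_le)
  then obtain qs where qs: "xs = trajectory ?x qs" "kcover_path k ?x qs" "sorted_wrt (>) (map snd qs)"
      "apply_swaps ?x qs = ?y" "?x \<in> perms n"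
    using incr_kchain_from_imp_trajectory[OF chain] by blast
  have row: "tableau_row n (Psi n C) k = rev qs"
    using tableau_row_Psi[OF k _ qs(2,5,3)] the_incr_kchain_from[OF chain] qs(1) \<open>?y \<in> perms n \<and> _\<close> by blast
  have straddle: "straddles k (length ?x) qs" using kcover_path_straddles[OF qs(2)] .
  then show "straddles k n (tableau_row n (Psi n C) k)" using row perms_length[OF qs(5)] by simp
  show "apply_swaps ?y (tableau_row n (Psi n C) k) = ?x" using apply_swaps_rev[OF straddle] qs(4) row by simp
  moreover have "straddles k (length ?y) (rev qs)" using straddle arg_cong[OF qs(4), of length] by simp
  ultimately show "cover_descent ?y (tableau_row n (Psi n C) k)"
    using cover_descent_iff_kcover_path[of k ?y "rev qs"] qs(2) row by simp
qed

definition tableau_prefix :: "nat \<Rightarrow> tableau \<Rightarrow> nat \<Rightarrow> nat list" where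
  "tableau_prefix n T j = apply_swaps (w0 n) (concat (map (tableau_row n T) [1..<Suc j]))"

text \<open>The inverse of Psi: entry s of the chain is u_{n-1-s}, the permutation reached
  from w_0 after reading rows 1, ..., n - 1 - s of T.\<close>
definition tableau_chain :: "nat \<Rightarrow> tableau \<Rightarrow> nat list list" where
  "tableau_chain n T = map (\<lambda>s. tableau_prefix n T (n - 1 - s)) [0..<n]"

lemma tableau_prefix_0 [simp]: "tableau_prefix n T 0 = w0 n"
  by (simp add: tableau_prefix_def)

lemma tableau_prefix_Suc:
  "tableau_prefix n T (Suc j) = apply_swaps (tableau_prefix n T j) (tableau_row n T (Suc j))"
  by (simp add: tableau_prefix_def apply_swaps_append)

lemma cover_descent_rows:
  "cover_descent (w0 n) (concat (map (tableau_row n T) [1..<Suc j])) \<longleftrightarrow>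
   (\<forall>k \<in> {1..j}. cover_descent (tableau_prefix n T (k - 1)) (tableau_row n T k))"
proof (induction j)
  case (Suc j)
  have "concat (map (tableau_row n T) [1..<Suc (Suc j)]) =
      concat (map (tableau_row n T) [1..<Suc j]) @ tableau_row n T (Suc j)"
    by simp
  then have "cover_descent (w0 n) (concat (map (tableau_row n T) [1..<Suc (Suc j)])) \<longleftrightarrow>
      cover_descent (w0 n) (concat (map (tableau_row n T) [1..<Suc j])) \<and>
      cover_descent (tableau_prefix n T j) (tableau_row n T (Suc j))"
    by (simp only: cover_descent_append tableau_prefix_def)
  moreover have "{1..Suc j} = insert (Suc j) {1..j}" by auto
  ultimately show ?case using Suc.IH by (simp del: upt_Suc add: conj_commute)
qed simp

lemma associated_iff_rows:
  assumes "1 \<le> n"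
  shows "associated n T w \<longleftrightarrow>
    (\<forall>k \<in> {1..<n}. cover_descent (tableau_prefix n T (k - 1)) (tableau_row n T k)) \<and>
    tableau_prefix n T (n - 1) = w"
proof -
  have "[1..<n] = [1..<Suc (n - 1)]" "{1..<n} = {1..n - 1}" using assms by auto
  then show ?thesis
    unfolding associated_iff_cover_descent reading_word_eq_concat_rows tableau_prefix_def
    using cover_descent_rows[of n T "n - 1"] by (simp add: tableau_prefix_def)
qed

lemma tableau_prefix_Psi:
  assumes C: "C \<in> chains n w" and "1 \<le> n"
  shows "j < n \<Longrightarrow> tableau_prefix n (Psi n C) j = C ! (n - 1 - j)"
proof (induction j)
  case 0
  then show ?case using chains_hd_last[OF assms] by simp
next
  case (Suc j)
  have "n - Suc j = n - 1 - j" by simp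
  then show ?case using Suc chains_row(3)[OF C _ Suc.prems] by (simp add: tableau_prefix_Suc)
qed

lemma tableau_chain_Psi: "C \<in> chains n w \<Longrightarrow> 1 \<le> n \<Longrightarrow> tableau_chain n (Psi n C) = C"
  by (rule nth_equalityI) (auto simp: tableau_chain_def chains_def tableau_prefix_Psi)

lemma Psi_in_FT:
  assumes C: "C \<in> chains n w" and n: "1 \<le> n"
  shows "Psi n C \<in> FT n w"
proof -
  have "\<forall>i j. Psi n C (i, j) \<noteq> None \<longrightarrow> 1 \<le> i \<and> 1 \<le> j \<and> i + j \<le> n"
    using Psi_support by blast
  then have "flagged n (Psi n C)"
    using chains_row(1)[OF C] by (intro flagged_if_rows_straddle) auto
  moreover have "cover_descent (tableau_prefix n (Psi n C) (k - 1)) (tableau_row n (Psi n C) k)"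
    if "k \<in> {1..<n}" for k
  proof -
    have k: "1 \<le> k" "k < n" using that by auto
    then have "tableau_prefix n (Psi n C) (k - 1) = C ! (n - k)"
      using tableau_prefix_Psi[OF C n, of "k - 1"] by simp
    then show ?thesis using chains_row(2)[OF C k] by simp
  qed
  moreover have "tableau_prefix n (Psi n C) (n - 1) = w"
    using tableau_prefix_Psi[OF C n, of "n - 1"] chains_hd_last[OF C n] n by simp
  ultimately show ?thesis by (simp add: FT_def associated_iff_rows[OF n])
qed

lemma straddles_tableau_row: "flagged n T \<Longrightarrow> straddles k n (tableau_row n T k)"
  unfolding straddles_def by (clarsimp simp: mem_tableau_row flagged_def)

lemma FT_rows:
  assumes T: "T \<in> FT n w" and k: "1 \<le> k" "k < n"
  shows "straddles k n (tableau_row n T k)"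
    and "cover_descent (tableau_prefix n T (k - 1)) (tableau_row n T k)"
proof -
  show "straddles k n (tableau_row n T k)" using T straddles_tableau_row by (simp add: FT_def)
  have "\<forall>k \<in> {1..<n}. cover_descent (tableau_prefix n T (k - 1)) (tableau_row n T k)"
    using T k by (simp add: FT_def associated_iff_rows)
  then show "cover_descent (tableau_prefix n T (k - 1)) (tableau_row n T k)" using k by simp
qed

lemma FT_prefix_last: "T \<in> FT n w \<Longrightarrow> 1 \<le> n \<Longrightarrow> tableau_prefix n T (n - 1) = w"
  by (simp add: FT_def associated_iff_rows)

lemma FT_prefix_perms:
  assumes T: "T \<in> FT n w"
  shows "j < n \<Longrightarrow> tableau_prefix n T j \<in> perms n \<and> decreasing_after (Suc j) (tableau_prefix n T j)"
proof (induction j)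
  case 0
  then show ?case using w0_in_perms decreasing_after_w0 by simp
next
  case (Suc j)
  have y: "tableau_prefix n T j \<in> perms n" "decreasing_after (Suc j) (tableau_prefix n T j)"
    using Suc by auto
  have row: "straddles (Suc j) n (tableau_row n T (Suc j))"
    "cover_descent (tableau_prefix n T j) (tableau_row n T (Suc j))"
    using FT_rows[OF T _ Suc.prems] by simp_all
  from cover_descent_row_imp_incr_kchain(1,2)[OF y row sorted_tableau_row]
  show ?case by (auto simp: tableau_prefix_Suc intro: decreasing_after_mono)
qed

lemma FT_row:
  assumes T: "T \<in> FT n w" and k: "1 \<le> k" "k < n"
  defines "x \<equiv> tableau_prefix n T k" and "y \<equiv> tableau_prefix n T (k - 1)"
  shows "kcover_path k x (rev (tableau_row n T k))"
    and "incr_kchain_from k x y (trajectory x (rev (tableau_row n T k)))"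
proof -
  obtain j where "k = Suc j" using k(1) by (cases k) auto
  then have x: "x = apply_swaps y (tableau_row n T k)"
    by (simp add: x_def y_def tableau_prefix_Suc)
  have y: "y \<in> perms n" "decreasing_after k y"
    using FT_prefix_perms[OF T, of "k - 1"] k by (simp_all add: y_def)
  show "kcover_path k x (rev (tableau_row n T k))"
    and "incr_kchain_from k x y (trajectory x (rev (tableau_row n T k)))"
    using cover_descent_row_imp_incr_kchain(3,4)[OF y FT_rows[OF T k, folded y_def] sorted_tableau_row] x
    by simp_all
qed

lemma tableau_chain_nth: "s < n \<Longrightarrow> tableau_chain n T ! s = tableau_prefix n T (n - 1 - s)"
  by (simp add: tableau_chain_def)

lemma tableau_chain_in_chains:
  assumes T: "T \<in> FT n w" and n: "1 \<le> n"
  shows "tableau_chain n T \<in> chains n w"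
proof -
  have "tableau_prefix n T (n - 1) = w" using FT_prefix_last[OF T n] .
  then have hd: "hd (tableau_chain n T) = w" and last: "last (tableau_chain n T) = w0 n"
    using n by (auto simp: tableau_chain_def hd_map last_map)
  have "\<exists>xs. incr_kchain_from (rev [1..<n] ! s) (tableau_chain n T ! s) (tableau_chain n T ! (s + 1)) xs"
    if s: "s < n - 1" for s
  proof -
    define k where "k = n - 1 - s"
    have k: "1 \<le> k" "k < n" and "rev [1..<n] ! s = k"
      using s nth_rev_upt_1[OF s] by (auto simp: k_def)
    moreover have "tableau_chain n T ! s = tableau_prefix n T k"
      "tableau_chain n T ! (s + 1) = tableau_prefix n T (k - 1)"
      using s by (simp_all add: tableau_chain_nth k_def)
    ultimately show ?thesis using FT_row(2)[OF T k] by auto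
  qed
  moreover have "length (tableau_chain n T) = n" by (simp add: tableau_chain_def)
  ultimately show ?thesis using hd last n unfolding chains_def compatible_def by simp
qed

lemma Psi_tableau_chain:
  assumes T: "T \<in> FT n w" and n: "1 \<le> n"
  shows "Psi n (tableau_chain n T) = T"
proof (rule flagged_eqI)
  let ?C = "tableau_chain n T"
  show "flagged n (Psi n ?C)" using Psi_in_FT[OF tableau_chain_in_chains[OF T n] n] by (simp add: FT_def)
  show "flagged n T" using T by (simp add: FT_def)
  show "\<forall>k \<in> {1..<n}. tableau_row n (Psi n ?C) k = tableau_row n T k"
  proof
    fix k assume "k \<in> {1..<n}"
    then have k: "1 \<le> k" "k < n" by auto
    let ?x = "tableau_prefix n T k" and ?qs = "rev (tableau_row n T k)"
    have nth: "?C ! (n - 1 - k) = ?x" "?C ! (n - k) = tableau_prefix n T (k - 1)"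
      using k by (simp_all add: tableau_chain_nth)
    have "(THE xs. incr_kchain_from k (?C ! (n - 1 - k)) (?C ! (n - k)) xs) = trajectory ?x ?qs"
    proof -
      have "tableau_prefix n T (k - 1) \<in> perms n" "decreasing_after k (tableau_prefix n T (k - 1))"
        using FT_prefix_perms[OF T, of "k - 1"] k by simp_all
      then show ?thesis unfolding nth by (rule the_incr_kchain_from[OF FT_row(2)[OF T k]])
    qed
    moreover have "?x \<in> perms n" using FT_prefix_perms[OF T] k by simp
    moreover have "sorted_wrt (>) (map snd ?qs)"
      using sorted_tableau_row[of n T k] by (simp add: rev_map[symmetric] sorted_wrt_rev)
    ultimately show "tableau_row n (Psi n ?C) k = tableau_row n T k"
      using tableau_row_Psi[OF k _ FT_row(1)[OF T k]] by simp
  qed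
qed

theorem lemma4p12:
  fixes n :: nat and w :: "nat list"
  assumes "1 \<le> n" and "w \<in> perms n"
  shows "bij_betw (Psi n) (chains n w) (FT n w)"
proof (rule bij_betw_byWitness[where f' = "tableau_chain n"])
  show "\<forall>C \<in> chains n w. tableau_chain n (Psi n C) = C" using tableau_chain_Psi assms(1) by blast
  show "\<forall>T \<in> FT n w. Psi n (tableau_chain n T) = T" using Psi_tableau_chain assms(1) by blast
  show "Psi n ` chains n w \<subseteq> FT n w" using Psi_in_FT assms(1) by blast
  show "tableau_chain n ` FT n w \<subseteq> chains n w" using tableau_chain_in_chains assms(1) by blast
qed

end
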